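(* Let $y_0\in Y$. If $V_{per}(y_0)=\liminf_{T\to\infty}V_T(y_0)$, then $\liminf_{T\to\infty}V_T(y_0)\ge k^*(y_0)$.
   Context: Let $Y\subset\mathbb{R}^m$ be nonempty compact, $U_0$ a compact metric space, $U(\cdot):Y\rightsquigarrow U_0$ upper semicontinuous and compact-valued, and $f:\mathbb{R}^m\times U_0\to\mathbb{R}^m$, $k:\mathbb{R}^m\times U_0\to\mathbb{R}$ continuous. Put $A(y):=\{u\in U(y): f(y,u)\in Y\}$ and $G:=\{(y,u):y\in Y,\ u\in A(y)\}$. Standing assumption: $A(y)\ne\emptyset$ for all $y$. An admissible process from $z\in Y$ is a pair $(y(t),u(t))$ with $y(0)=z$, $u(t)\in A(y(t))$ and $y(t+1)=f(y(t),u(t))$. Let $\mathcal U_T(y_0)$ denote the admissible controls from $y_0$ on $\{0,\dots,T-1\}$, and set $V_T(y_0):=\frac1T\min_{u\in\mathcal U_T(y_0)}\sum_{t=0}^{T-1}k(y(t),u(t))$. Periodic value: - A $\mathcal T$-periodic admissible process ($\mathcal T$ a positive integer) is an admissible process $(y_{\mathcal T},u_{\mathcal T})$ on $\{0,1,\dots\}$ with $(y_{\mathcal T}(t+\mathcal T),u_{\mathcal T}(t+\mathcal T))=(y_{\mathcal T}(t),u_{\mathcal T}(t))$ for all $t$. - It is finite-time reachable from $y_0$ if for some integer $\bar t\ge0$ some $u\in\mathcal U_{\bar t}(y_0)$ has trajectory with $y(\bar t)=y_{\mathcal T}(0)$. - $V_{per}(y_0):=\inf\frac1{\mathcal T}\sum_{t=0}^{\mathcal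 T-1}k(y_{\mathcal T}(t),u_{\mathcal T}(t))$, where the infimum is over all $\mathcal T$ and all such finite-time-reachable $\mathcal T$-periodic processes. LP value: - $\mathcal P(G)$ denotes the Borel probability measures on $G$ and $\mathcal M_+(G)$ the finite nonnegative Borel measures on $G$. - $W:=\{\gamma\in\mathcal P(G):\int_G(\varphi(f(y,u))-\varphi(y))\,d\gamma=0\ \forall\varphi\in C(Y)\}$. - $k^*(y_0)$ is the infimum of $\int_Gk\,d\gamma$ over pairs $(\gamma,\xi)\in\mathcal P(G)\times\mathcal M_+(G)$ with $\gamma\in W$ and $\int_G(\varphi(y_0)-\varphi(y))\,d\gamma+\int_G(\varphi(f(y,u))-\varphi(y))\,d\xi=0$ for all $\varphi\in C(Y)$. *)

theory Defs
  imports "HOL-Probability.Probability"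
begin

text \<open>State space: a Euclidean space 'a (standing for R^m); controls live in a
  metric space 'b, the compact control set being U0 \<subseteq> 'b.
  The dynamics f and running cost k take pairs (y,u).\<close>

definition usc_on :: "'a::metric_space set \<Rightarrow> ('a \<Rightarrow> 'b::topological_space set) \<Rightarrow> bool" where
  "usc_on Y U \<longleftrightarrow> (\<forall>y\<in>Y. \<forall>V. open V \<and> U y \<subseteq> V \<longrightarrow>
      (\<exists>e>0. \<forall>y'\<in>Y. dist y' y < e \<longrightarrow> U y' \<subseteq> V))"

definition Aset :: "'a set \<Rightarrow> ('a \<Rightarrow> 'b set) \<Rightarrow> ('a \<times> 'b \<Rightarrow> 'a) \<Rightarrow> 'a \<Rightarrow> 'b set" where
  "Aset Y U f y = {u \<in> U y. f (y, u) \<in> Y}"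

definition Gset :: "'a set \<Rightarrow> ('a \<Rightarrow> 'b set) \<Rightarrow> ('a \<times> 'b \<Rightarrow> 'a) \<Rightarrow> ('a \<times> 'b) set" where
  "Gset Y U f = Sigma Y (Aset Y U f)"

fun traj :: "('a \<times> 'b \<Rightarrow> 'a) \<Rightarrow> 'a \<Rightarrow> (nat \<Rightarrow> 'b) \<Rightarrow> nat \<Rightarrow> 'a" where
  "traj f z u 0 = z"
| "traj f z u (Suc t) = f (traj f z u t, u t)"

text \<open>Admissible controls on {0,...,T-1} from z (values at times \<ge> T are irrelevant).\<close>
definition adm_controls :: "'a set \<Rightarrow> ('a \<Rightarrow> 'b set) \<Rightarrow> ('a \<times> 'b \<Rightarrow> 'a) \<Rightarrow> nat \<Rightarrow> 'a \<Rightarrow> (nat \<Rightarrow> 'b) set" where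
  "adm_controls Y U f T z = {u. \<forall>t<T. u t \<in> Aset Y U f (traj f z u t)}"

text \<open>V_T(z) (the minimum exists under the standing assumptions, so Inf = min).\<close>
definition VT :: "'a set \<Rightarrow> ('a \<Rightarrow> 'b set) \<Rightarrow> ('a \<times> 'b \<Rightarrow> 'a) \<Rightarrow> ('a \<times> 'b \<Rightarrow> real) \<Rightarrow> nat \<Rightarrow> 'a \<Rightarrow> real" where
  "VT Y U f k T z = (1 / real T) *
     Inf {\<Sum>t<T. k (traj f z u t, u t) | u. u \<in> adm_controls Y U f T z}"

definition periodic_process :: "'a set \<Rightarrow> ('a \<Rightarrow> 'b set) \<Rightarrow> ('a \<times> 'b \<Rightarrow> 'a) \<Rightarrow> nat \<Rightarrow> (nat \<Rightarrow> 'a) \<Rightarrow> (nat \<Rightarrow> 'b) \<Rightarrow> bool" where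
  "periodic_process Y U f P y u \<longleftrightarrow> 0 < P \<and>
     (\<forall>t. y t \<in> Y \<and> u t \<in> Aset Y U f (y t) \<and> y (Suc t) = f (y t, u t)) \<and>
     (\<forall>t. y (t + P) = y t \<and> u (t + P) = u t)"

definition reachable_from :: "'a set \<Rightarrow> ('a \<Rightarrow> 'b set) \<Rightarrow> ('a \<times> 'b \<Rightarrow> 'a) \<Rightarrow> 'a \<Rightarrow> 'a \<Rightarrow> bool" where
  "reachable_from Y U f z x \<longleftrightarrow>
     (\<exists>tb. \<exists>u \<in> adm_controls Y U f tb z. traj f z u tb = x)"

text \<open>Periodic value (Inf of the empty set is +\<infinity>).\<close>
definition Vper :: "'a set \<Rightarrow> ('a \<Rightarrow> 'b set) \<Rightarrow> ('a \<times> 'b \<Rightarrow> 'a) \<Rightarrow> ('a \<times> 'b \<Rightarrow> real) \<Rightarrow> 'a \<Rightarrow> ereal" where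
  "Vper Y U f k z = Inf {ereal ((1 / real P) * (\<Sum>t<P. k (y t, u t))) | P y u.
      periodic_process Y U f P y u \<and> reachable_from Y U f z (y 0)}"

definition prob_on :: "('a::topological_space \<times> 'b::topological_space) set \<Rightarrow> ('a \<times> 'b) measure \<Rightarrow> bool" where
  "prob_on G \<gamma> \<longleftrightarrow> prob_space \<gamma> \<and> sets \<gamma> = sets (restrict_space borel G)"

definition finmeas_on :: "('a::topological_space \<times> 'b::topological_space) set \<Rightarrow> ('a \<times> 'b) measure \<Rightarrow> bool" where
  "finmeas_on G \<xi> \<longleftrightarrow> finite_measure \<xi> \<and> sets \<xi> = sets (restrict_space borel G)"

definition Wset :: "'a::topological_space set \<Rightarrow> ('a \<Rightarrow> 'b::topological_space set) \<Rightarrow> ('a \<times> 'b \<Rightarrow> 'a) \<Rightarrow> ('a \<times> 'b) measure set" where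
  "Wset Y U f = {\<gamma>. prob_on (Gset Y U f) \<gamma> \<and>
     (\<forall>\<phi>::'a \<Rightarrow> real. continuous_on Y \<phi> \<longrightarrow>
        (\<integral>p. \<phi> (f p) - \<phi> (fst p) \<partial>\<gamma>) = 0)}"

definition kstar :: "'a::topological_space set \<Rightarrow> ('a \<Rightarrow> 'b::topological_space set) \<Rightarrow> ('a \<times> 'b \<Rightarrow> 'a) \<Rightarrow> ('a \<times> 'b \<Rightarrow> real) \<Rightarrow> 'a \<Rightarrow> ereal" where
  "kstar Y U f k z = Inf {ereal (\<integral>p. k p \<partial>\<gamma>) | \<gamma> \<xi>.
      prob_on (Gset Y U f) \<gamma> \<and> finmeas_on (Gset Y U f) \<xi> \<and> \<gamma> \<in> Wset Y U f \<and>
      (\<forall>\<phi>::'a \<Rightarrow> real. continuous_on Y \<phi> \<longrightarrow>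
         (\<integral>p. \<phi> z - \<phi> (fst p) \<partial>\<gamma>) + (\<integral>p. \<phi> (f p) - \<phi> (fst p) \<partial>\<xi>) = 0)}"

end

theory Submission
  imports Defs
begin

text \<open>Every finite-time reachable periodic process yields a feasible pair of the linear program
  with the same cost: \<gamma> is the uniform occupation measure of one period, which is invariant
  because the period closes up, and \<xi> collects the paths leading from y0 into the period.
  Hence k*(y0) \<le> V_per(y0), and the hypothesis V_per(y0) = liminf V_T(y0) concludes.\<close>

definition occupation_measure ::
    "('a::topological_space) set \<Rightarrow> 'c set \<Rightarrow> real \<Rightarrow> ('c \<Rightarrow> 'a) \<Rightarrow> 'a measure" where
  "occupation_measure G I c g = distr (density (count_space I) (\<lambda>_. ennreal c)) (restrict_space borel G) g"

lemma sets_occupation_measure [simp]: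
  "sets (occupation_measure G I c g) = sets (restrict_space borel G)"
  by (simp add: occupation_measure_def)

lemma occupation_measure_measurable:
  "g ` I \<subseteq> G \<Longrightarrow> g \<in> density (count_space I) (\<lambda>_. ennreal c) \<rightarrow>\<^sub>M restrict_space borel G"
  by (subst measurable_cong_sets[OF sets_density refl]) (auto simp: space_restrict_space)

lemma space_occupation_measure [simp]: "space (occupation_measure G I c g) = G"
  by (simp add: occupation_measure_def space_restrict_space)

lemma emeasure_space_occupation_measure:
  assumes "finite I" "g ` I \<subseteq> G"
  shows "emeasure (occupation_measure G I c g) G = ennreal c * card I"
proof -
  have "emeasure (occupation_measure G I c g) G = emeasure (density (count_space I) (\<lambda>_. ennreal c)) I"
    using assms(2) sets.top[of "restrict_space borel G"] unfolding occupation_measure_def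
    by (subst emeasure_distr[OF occupation_measure_measurable[OF assms(2)]])
       (auto simp: space_restrict_space intro!: arg_cong2[where f = emeasure])
  also have "\<dots> = ennreal c * card I"
    using assms(1) by (simp add: emeasure_density_const)
  finally show ?thesis .
qed

lemma finite_measure_occupation_measure:
  assumes "finite I" "g ` I \<subseteq> G"
  shows "finite_measure (occupation_measure G I c g)"
  by (rule finite_measureI)
     (simp add: emeasure_space_occupation_measure[OF assms] ennreal_mult_eq_top_iff)

lemma prob_space_occupation_measure:
  assumes "finite I" "g ` I \<subseteq> G" "c * real (card I) = 1"
  shows "prob_space (occupation_measure G I c g)"
proof
  have "ennreal c * card I = ennreal (c * card I)"
    by (simp add: ennreal_mult'' ennreal_of_nat_eq_real_of_nat)
  then show "emeasure (occupation_measure G I c g) (space (occupation_measure G I c g)) = 1"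
    by (simp add: emeasure_space_occupation_measure[OF assms(1,2)] assms(3))
qed

lemma integral_occupation_measure:
  fixes h :: "'a::topological_space \<Rightarrow> real"
  assumes "finite I" "g ` I \<subseteq> G" "0 \<le> c" "continuous_on G h"
  shows "(\<integral>x. h x \<partial>occupation_measure G I c g) = c * (\<Sum>i\<in>I. h (g i))"
proof -
  have "(\<integral>x. h x \<partial>occupation_measure G I c g) = (\<integral>i. h (g i) \<partial>density (count_space I) (\<lambda>_. ennreal c))"
    unfolding occupation_measure_def
    by (rule integral_distr[OF occupation_measure_measurable[OF assms(2)]
                               borel_measurable_continuous_on_restrict[OF assms(4)]])
  also have "\<dots> = (\<integral>i. c * h (g i) \<partial>count_space I)"
    using integral_density[of "\<lambda>i. h (g i)" "count_space I" "\<lambda>_. c"] assms(3) by simp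
  also have "\<dots> = c * (\<Sum>i\<in>I. h (g i))"
    using assms(1) by (simp add: lebesgue_integral_count_space_finite sum_distrib_left)
  finally show ?thesis .
qed

lemma continuous_on_Gset:
  assumes "\<forall>y\<in>Y. U y \<subseteq> U0" "continuous_on (UNIV \<times> U0) h"
  shows "continuous_on (Gset Y U f) h"
  by (rule continuous_on_subset[OF assms(2)]) (use assms(1) in \<open>force simp: Gset_def Aset_def\<close>)

lemma continuous_on_Gset_test_functions:
  fixes \<phi> :: "'a::topological_space \<Rightarrow> real"
  assumes "continuous_on (Gset Y U f) f" "continuous_on Y \<phi>"
  shows "continuous_on (Gset Y U f) (\<lambda>p. \<phi> (fst p))"
    and "continuous_on (Gset Y U f) (\<lambda>p. \<phi> (f p))"
proof -
  have "fst ` Gset Y U f \<subseteq> Y" "f ` Gset Y U f \<subseteq> Y"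
    by (auto simp: Gset_def Aset_def)
  then show "continuous_on (Gset Y U f) (\<lambda>p. \<phi> (fst p))" "continuous_on (Gset Y U f) (\<lambda>p. \<phi> (f p))"
    by (auto intro!: continuous_on_compose2[OF assms(2)] continuous_intros assms(1))
qed

lemma traj_cong: "(\<And>t. t < s \<Longrightarrow> u t = v t) \<Longrightarrow> traj f z u s = traj f z v s"
  by (induction s) auto

lemma traj_in_Gset:
  assumes "z \<in> Y" "\<And>s. w s \<in> Aset Y U f (traj f z w s)"
  shows "(traj f z w s, w s) \<in> Gset Y U f"
proof -
  have "traj f z w s \<in> Y"
    using assms(1) assms(2)[of "s - 1"] by (cases s) (auto simp: Aset_def)
  then show ?thesis
    using assms(2) by (simp add: Gset_def)
qed

lemma reachable_periodic_process_admissible_control: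
  assumes per: "periodic_process Y U f P y u" and reach: "reachable_from Y U f z (y 0)"
  obtains w tb where "\<And>s. w s \<in> Aset Y U f (traj f z w s)" "\<And>t. traj f z w (tb + t) = y t"
proof -
  obtain tb v where v: "v \<in> adm_controls Y U f tb z" and v_end: "traj f z v tb = y 0"
    using reach unfolding reachable_from_def by auto
  have uA: "\<And>t. u t \<in> Aset Y U f (y t)" and y_step: "\<And>t. y (Suc t) = f (y t, u t)"
    using per unfolding periodic_process_def by auto
  define w where "w s = (if s < tb then v s else u (s - tb))" for s
  have before: "traj f z w s = traj f z v s" if "s \<le> tb" for s
    by (rule traj_cong) (use that in \<open>simp add: w_def\<close>)
  have after: "traj f z w (tb + t) = y t" for t
  proof (induction t)
    case 0
    show ?case using before[of tb] v_end by simp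
  next
    case (Suc t)
    then show ?case by (simp add: w_def y_step)
  qed
  have "w s \<in> Aset Y U f (traj f z w s)" for s
  proof (cases "s < tb")
    case True
    then show ?thesis using v before[of s] by (simp add: adm_controls_def w_def)
  next
    case False
    then obtain t where "s = tb + t" using le_Suc_ex not_less by blast
    then show ?thesis using uA after by (simp add: w_def)
  qed
  then show thesis using after that by blast
qed

lemma periodic_occupation_measure_in_Wset:
  assumes "continuous_on (Gset Y U f) f" "periodic_process Y U f P y u"
  shows "occupation_measure (Gset Y U f) {..<P} (1 / P) (\<lambda>t. (y t, u t)) \<in> Wset Y U f"
    (is "?\<gamma> \<in> _")
proof -
  have P: "0 < P" and yuG: "(\<lambda>t. (y t, u t)) ` {..<P} \<subseteq> Gset Y U f"
    and y_step: "\<And>t. y (Suc t) = f (y t, u t)"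
    using assms(2) unfolding periodic_process_def by (auto simp: Gset_def)
  have y_P: "y P = y 0"
    using assms(2) unfolding periodic_process_def by (metis add_0)
  have "prob_on (Gset Y U f) ?\<gamma>"
    unfolding prob_on_def using P by (auto intro!: prob_space_occupation_measure[OF finite_lessThan yuG])
  moreover have "(\<integral>p. \<phi> (f p) - \<phi> (fst p) \<partial>?\<gamma>) = 0" if "continuous_on Y \<phi>" for \<phi> :: "'a \<Rightarrow> real"
  proof -
    have "(\<integral>p. \<phi> (f p) - \<phi> (fst p) \<partial>?\<gamma>) = (\<Sum>t<P. \<phi> (y (Suc t)) - \<phi> (y t)) / P"
      using continuous_on_Gset_test_functions[OF assms(1) that]
      by (subst integral_occupation_measure[OF _ yuG]) (auto intro!: continuous_intros simp: y_step)
    also have "\<dots> = 0"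
      using y_P by (simp add: sum_lessThan_telescope[of "\<lambda>t. \<phi> (y t)"])
    finally show ?thesis .
  qed
  ultimately show ?thesis by (simp add: Wset_def)
qed

definition LP_feasible ::
    "'a::topological_space set \<Rightarrow> ('a \<Rightarrow> 'b::topological_space set) \<Rightarrow> ('a \<times> 'b \<Rightarrow> 'a) \<Rightarrow> 'a \<Rightarrow>
     ('a \<times> 'b) measure \<Rightarrow> ('a \<times> 'b) measure \<Rightarrow> bool" where
  "LP_feasible Y U f z \<gamma> \<xi> \<longleftrightarrow>
     prob_on (Gset Y U f) \<gamma> \<and> finmeas_on (Gset Y U f) \<xi> \<and> \<gamma> \<in> Wset Y U f \<and>
     (\<forall>\<phi>::'a \<Rightarrow> real. continuous_on Y \<phi> \<longrightarrow>
        (\<integral>p. \<phi> z - \<phi> (fst p) \<partial>\<gamma>) + (\<integral>p. \<phi> (f p) - \<phi> (fst p) \<partial>\<xi>) = 0)"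

lemma kstar_le_LP_feasible:
  "LP_feasible Y U f z \<gamma> \<xi> \<Longrightarrow> kstar Y U f k z \<le> ereal (\<integral>p. k p \<partial>\<gamma>)"
  unfolding kstar_def LP_feasible_def by (rule Inf_lower) blast

text \<open>The second measure spreads mass 1/P over the paths from z to each point y t of the
  period; the constraint then telescopes along these paths.\<close>
lemma LP_feasible_periodic_occupation_measure:
  assumes fc: "continuous_on (Gset Y U f) f" and z: "z \<in> Y"
    and per: "periodic_process Y U f P y u" and reach: "reachable_from Y U f z (y 0)"
  shows "\<exists>\<xi>. LP_feasible Y U f z (occupation_measure (Gset Y U f) {..<P} (1 / P) (\<lambda>t. (y t, u t))) \<xi>"
proof -
  let ?G = "Gset Y U f"
  let ?\<gamma> = "occupation_measure ?G {..<P} (1 / P) (\<lambda>t. (y t, u t))"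
  obtain w tb where wA: "\<And>s. w s \<in> Aset Y U f (traj f z w s)"
    and w_tb: "\<And>t. traj f z w (tb + t) = y t"
    using reachable_periodic_process_admissible_control[OF per reach] by blast
  define x where "x = traj f z w"
  define I where "I = Sigma {..<P} (\<lambda>t. {..<tb + t})"
  define \<xi> where "\<xi> = occupation_measure ?G I (1 / P) (\<lambda>(t, s). (x s, w s))"
  have yuG: "(\<lambda>t. (y t, u t)) ` {..<P} \<subseteq> ?G"
    using per unfolding periodic_process_def by (auto simp: Gset_def)
  have xwG: "(\<lambda>(t, s). (x s, w s)) ` I \<subseteq> ?G"
    using traj_in_Gset[OF z wA] by (auto simp: x_def)
  have I: "finite I"
    by (simp add: I_def)
  have "finmeas_on ?G \<xi>"
    by (simp add: finmeas_on_def \<xi>_def finite_measure_occupation_measure[OF I xwG])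
  moreover have "(\<integral>p. \<phi> z - \<phi> (fst p) \<partial>?\<gamma>) + (\<integral>p. \<phi> (f p) - \<phi> (fst p) \<partial>\<xi>) = 0"
    if \<phi>: "continuous_on Y \<phi>" for \<phi> :: "'a \<Rightarrow> real"
  proof -
    note \<phi>_cont = continuous_on_Gset_test_functions[OF fc \<phi>]
    have telescope: "(\<Sum>s<tb + t. \<phi> (x (Suc s)) - \<phi> (x s)) = \<phi> (y t) - \<phi> z" for t
      using sum_lessThan_telescope[of "\<lambda>s. \<phi> (x s)" "tb + t"] w_tb[of t] by (simp add: x_def)
    have \<gamma>_integral: "(\<integral>p. \<phi> z - \<phi> (fst p) \<partial>?\<gamma>) = (\<Sum>t<P. \<phi> z - \<phi> (y t)) / P"
      using \<phi>_cont by (subst integral_occupation_measure[OF _ yuG]) (auto intro!: continuous_intros)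
    have "(\<integral>p. \<phi> (f p) - \<phi> (fst p) \<partial>\<xi>) = (\<Sum>(t, s)\<in>I. \<phi> (x (Suc s)) - \<phi> (x s)) / P"
      using \<phi>_cont unfolding \<xi>_def
      by (subst integral_occupation_measure[OF I xwG])
         (auto intro!: continuous_intros sum.cong simp: x_def)
    also have "\<dots> = (\<Sum>t<P. \<Sum>s<tb + t. \<phi> (x (Suc s)) - \<phi> (x s)) / P"
      by (simp add: I_def sum.Sigma)
    also have "\<dots> = (\<Sum>t<P. \<phi> (y t) - \<phi> z) / P"
      by (simp only: telescope)
    finally show ?thesis
      by (simp add: \<gamma>_integral sum_subtractf add_divide_distrib[symmetric])
  qed
  ultimately have "LP_feasible Y U f z ?\<gamma> \<xi>"
    using periodic_occupation_measure_in_Wset[OF fc per] by (simp add: LP_feasible_def Wset_def)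
  then show ?thesis ..
qed

lemma kstar_le_Vper:
  assumes U0: "\<forall>y\<in>Y. U y \<subseteq> U0"
    and fc: "continuous_on (UNIV \<times> U0) f" and kc: "continuous_on (UNIV \<times> U0) k" and z: "z \<in> Y"
  shows "kstar Y U f k z \<le> Vper Y U f k z"
  unfolding Vper_def
proof (rule Inf_greatest, safe)
  fix P y u
  assume per: "periodic_process Y U f P y u" and reach: "reachable_from Y U f z (y 0)"
  let ?\<gamma> = "occupation_measure (Gset Y U f) {..<P} (1 / P) (\<lambda>t. (y t, u t))"
  have yuG: "(\<lambda>t. (y t, u t)) ` {..<P} \<subseteq> Gset Y U f"
    using per unfolding periodic_process_def by (auto simp: Gset_def)
  obtain \<xi> where "LP_feasible Y U f z ?\<gamma> \<xi>"
    using LP_feasible_periodic_occupation_measure[OF continuous_on_Gset[OF U0 fc] z per reach] ..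
  then have "kstar Y U f k z \<le> ereal (\<integral>p. k p \<partial>?\<gamma>)"
    by (rule kstar_le_LP_feasible)
  also have "(\<integral>p. k p \<partial>?\<gamma>) = 1 / P * (\<Sum>t<P. k (y t, u t))"
    by (rule integral_occupation_measure[OF _ yuG _ continuous_on_Gset[OF U0 kc]]) auto
  finally show "kstar Y U f k z \<le> ereal (1 / P * (\<Sum>t<P. k (y t, u t)))" .
qed

theorem corollary2p5:
  fixes Y :: "'a::euclidean_space set"
    and U0 :: "'b::metric_space set"
    and U :: "'a \<Rightarrow> 'b set"
    and f :: "'a \<times> 'b \<Rightarrow> 'a"
    and k :: "'a \<times> 'b \<Rightarrow> real"
    and y0 :: 'a
  assumes "compact Y" and "Y \<noteq> {}"
    and "compact U0"
    and "\<forall>y\<in>Y. U y \<subseteq> U0 \<and> compact (U y)"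
    and "usc_on Y U"
    and "continuous_on (UNIV \<times> U0) f"
    and "continuous_on (UNIV \<times> U0) k"
    and "\<forall>y\<in>Y. Aset Y U f y \<noteq> {}"
    and "y0 \<in> Y"
    and "Vper Y U f k y0 = liminf (\<lambda>T. ereal (VT Y U f k T y0))"
  shows "liminf (\<lambda>T. ereal (VT Y U f k T y0)) \<ge> kstar Y U f k y0"
proof -
  have "\<forall>y\<in>Y. U y \<subseteq> U0"
    using assms(4) by blast
  then have "kstar Y U f k y0 \<le> Vper Y U f k y0"
    using kstar_le_Vper assms(6,7,9) by blast
  then show ?thesis
    using assms(10) by simp
qed

end
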